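(* Let $\mathcal X$ be finite with $N=|\mathcal X|\ge2$, let $0<c<1/N$ and $\varepsilon\ge\log\frac{2}{Nc}$. Then for every convex $f:(0,\infty)\to\mathbb R$ with $f(1)=0$ that is twice continuously differentiable with $f''(1)>0$, $$\sup_{K\in\mathcal M(\varepsilon,c)}\eta_f(K)=1.$$
   Context: For such $f$ and distributions $P\ll Q$ on a finite set, $D_f(P\|Q)=\sum_y Q(y)f\big(P(y)/Q(y)\big)$. For a kernel $K$ (row-stochastic matrix with entries $K_{Y|X=x}(y)$, $(K\circ P_X)(y)=\sum_xK_{Y|X=x}(y)P_X(x)$), $\eta_f(K)=\sup\frac{D_f(K\circ P_X\|K\circ Q_X)}{D_f(P_X\|Q_X)}$, the supremum over pairs of distributions on $\mathcal X$ with $0<D_f(P_X\|Q_X)<\infty$. PML: $\ell_{K\times P_X}(X\to y)=\log\frac{\max_x K_{Y|X=x}(y)}{(K\circ P_X)(y)}$ for full-support $P_X$ and $(K\circ P_X)(y)>0$. $\mathcal Q_{\mathcal X}(c)=\{P_X:\min_xP_X(x)\ge c\}$; $C(K,\mathcal P)=\sup_{P_X\in\mathcal P}\sup_{y:(K\circ P_X)(y)>0}\ell_{K\times P_X}(X\to y)$; $\mathcal M(\varepsilon,c)$ is the set of kernels from $\mathcal X$ to any finite output set with $C(K,\mathcal Q_{\mathcal X}(c))\le\varepsilon$. *)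

theory Defs
  imports "HOL-Analysis.Analysis"
begin

definition is_dist :: "('a \<Rightarrow> real) \<Rightarrow> 'a set \<Rightarrow> bool" where
  "is_dist P A \<longleftrightarrow> (\<forall>a. 0 \<le> P a) \<and> (\<forall>a. a \<notin> A \<longrightarrow> P a = 0) \<and> sum P A = 1"

definition abs_cont :: "('a \<Rightarrow> real) \<Rightarrow> ('a \<Rightarrow> real) \<Rightarrow> 'a set \<Rightarrow> bool" where
  "abs_cont P Q A \<longleftrightarrow> (\<forall>y\<in>A. Q y = 0 \<longrightarrow> P y = 0)"

definition fzero :: "(real \<Rightarrow> real) \<Rightarrow> ereal" where
  "fzero f = Lim (at_right 0) (\<lambda>t. ereal (f t))"

definition fdiv :: "(real \<Rightarrow> real) \<Rightarrow> 'a set \<Rightarrow> ('a \<Rightarrow> real) \<Rightarrow> ('a \<Rightarrow> real) \<Rightarrow> ereal" where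
  "fdiv f A P Q = (\<Sum>y\<in>A. if Q y = 0 then 0
      else if P y = 0 then ereal (Q y) * fzero f
      else ereal (Q y * f (P y / Q y)))"

definition kcomp :: "('x::finite \<Rightarrow> 'y \<Rightarrow> real) \<Rightarrow> ('x \<Rightarrow> real) \<Rightarrow> 'y \<Rightarrow> real" where
  "kcomp K P y = (\<Sum>x\<in>UNIV. K x y * P x)"

definition is_kernel :: "'y set \<Rightarrow> ('x \<Rightarrow> 'y \<Rightarrow> real) \<Rightarrow> bool" where
  "is_kernel Y K \<longleftrightarrow> finite Y \<and> (\<forall>x. is_dist (K x) Y)"

definition eta :: "(real \<Rightarrow> real) \<Rightarrow> 'y set \<Rightarrow> ('x::finite \<Rightarrow> 'y \<Rightarrow> real) \<Rightarrow> ereal" where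
  "eta f Y K = (SUP PQ \<in> {(P, Q). is_dist P (UNIV :: 'x set) \<and> is_dist Q UNIV \<and> abs_cont P Q UNIV
        \<and> 0 < fdiv f UNIV P Q \<and> fdiv f UNIV P Q < \<infinity>}.
      fdiv f Y (kcomp K (fst PQ)) (kcomp K (snd PQ)) / fdiv f UNIV (fst PQ) (snd PQ))"

definition pml :: "('x::finite \<Rightarrow> 'y \<Rightarrow> real) \<Rightarrow> ('x \<Rightarrow> real) \<Rightarrow> 'y \<Rightarrow> real" where
  "pml K P y = ln (Max (range (\<lambda>x. K x y)) / kcomp K P y)"

definition Qset :: "real \<Rightarrow> ('x::finite \<Rightarrow> real) set" where
  "Qset c = {P. is_dist P UNIV \<and> Min (range P) \<ge> c}"

definition Ccap :: "'y set \<Rightarrow> ('x::finite \<Rightarrow> 'y \<Rightarrow> real) \<Rightarrow> ('x \<Rightarrow> real) set \<Rightarrow> ereal" where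
  "Ccap Y K Ps = (SUP P \<in> Ps. SUP y \<in> {y \<in> Y. kcomp K P y > 0}. ereal (pml K P y))"

text \<open>M(eps,c): kernels (output sets represented as finite subsets of nat) with
  C(K, Q(c)) <= eps.\<close>
definition Mset :: "real \<Rightarrow> real \<Rightarrow> (nat set \<times> ('x::finite \<Rightarrow> nat \<Rightarrow> real)) set" where
  "Mset eps c = {(Y, K). is_kernel Y K \<and> Ccap Y K (Qset c) \<le> ereal eps}"

end

theory Submission
  imports Defs
begin

(* Upper bound: for every kernel K the data-processing inequality
   D_f(K o P || K o Q) <= D_f(P || Q) holds, by Jensen's inequality applied to the perspective
   q f(p/q) output by output.  If f(0+) is finite, f extends convexly to [0, infinity); if
   f(0+) = infinity, finiteness of D_f(P || Q) forces P > 0 wherever Q > 0, and the kernel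
   preserves this.  Hence eta_f(K) <= 1.

   Lower bound: fix inputs a /= b and let K send a to output 0, b to output 1 and every other
   input to a fair coin.  Both column sums are N/2, so (K o P)(y) >= cN/2 for P in Q(c) and the
   leakage is at most log (2/(Nc)).  On distributions supported by {a, b} the kernel acts as a
   bijection and preserves D_f, which is positive for P = ((1+h)/2, (1-h)/2), Q = (1/2, 1/2)
   and small h > 0 because f''(1) > 0. *)

lemma convex_on_secant_le_secant:
  fixes f :: "real \<Rightarrow> real"
  assumes f: "convex_on I f" and I: "x \<in> I" "y \<in> I" "b \<in> I"
    and order: "x < y" "y \<le> a" "a < b"
  shows "(f y - f x) / (y - x) \<le> (f b - f a) / (b - a)"
proof -
  have "(f y - f x) / (y - x) = (f x - f y) / (x - y)"
    by (metis minus_diff_eq minus_divide_divide)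
  also have "\<dots> \<le> (f x - f b) / (x - b)"
    using convex_on_slope_le(1)[OF f I(1,3), of y] order by simp
  also have "\<dots> \<le> (f y - f b) / (y - b)"
    using convex_on_slope_le(2)[OF f I(1,3), of y] order by simp
  also have "\<dots> \<le> (f b - f a) / (b - a)"
  proof (cases "y = a")
    case False
    then show ?thesis
      using convex_on_slope_le(2)[OF f I(2,3), of a] order
      by (metis minus_diff_eq minus_divide_divide order_le_less)
  qed (metis minus_diff_eq minus_divide_divide order_refl)
  finally show ?thesis .
qed

lemma convex_on_tendsto_fzero:
  fixes f :: "real \<Rightarrow> real"
  assumes f: "convex_on {0<..} f"
  shows "((\<lambda>t. ereal (f t)) \<longlongrightarrow> fzero f) (at_right 0)" and "fzero f \<noteq> -\<infinity>"
proof -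
  define d where "d = f 2 - f 1"
  define \<psi> where "\<psi> t = f t - d * t" for t
  have \<psi>_antimono: "\<psi> t \<le> \<psi> s" if "0 < s" "s < t" "t \<le> 1" for s t
  proof -
    have "(f t - f s) / (t - s) \<le> d"
      using convex_on_secant_le_secant[OF f, of s t 2 1] that by (simp add: d_def)
    then have "f t - f s \<le> d * (t - s)"
      using that by (simp add: pos_divide_le_eq)
    then show ?thesis by (simp add: \<psi>_def algebra_simps)
  qed
  define l where "l = (SUP t\<in>{0<..<1}. ereal (\<psi> t))"
  have "ereal (\<psi> (1/2)) \<le> l" unfolding l_def by (rule SUP_upper) auto
  then have l_finite_below: "l \<noteq> -\<infinity>" by auto
  have "((\<lambda>t. ereal (\<psi> t)) \<longlongrightarrow> l) (at_right 0)"
  proof (rule increasing_tendsto)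
    show "\<forall>\<^sub>F t in at_right 0. ereal (\<psi> t) \<le> l"
      using eventually_at_right_real[OF zero_less_one] by eventually_elim (auto simp: l_def intro: SUP_upper)
  next
    fix x assume "x < l"
    then obtain t0 where t0: "t0 \<in> {0<..<1}" "x < ereal (\<psi> t0)" unfolding l_def less_SUP_iff by blast
    have "\<forall>\<^sub>F t in at_right 0. t \<in> {0<..<t0}"
      using t0 by (intro eventually_at_right_real) auto
    then show "\<forall>\<^sub>F t in at_right 0. x < ereal (\<psi> t)"
    proof eventually_elim
      case (elim t)
      then show ?case using \<psi>_antimono[of t t0] t0 by (auto intro: less_le_trans)
    qed
  qed
  moreover have "((\<lambda>t. ereal (d * t)) \<longlongrightarrow> ereal 0) (at_right 0)"
    unfolding lim_ereal by (intro tendsto_eq_intros) auto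
  ultimately have "((\<lambda>t. ereal (\<psi> t) + ereal (d * t)) \<longlongrightarrow> l + ereal 0) (at_right 0)"
    by (intro tendsto_add_ereal_general1) auto
  then have lim: "((\<lambda>t. ereal (f t)) \<longlongrightarrow> l) (at_right 0)" by (simp add: \<psi>_def)
  moreover have "fzero f = l" unfolding fzero_def by (rule tendsto_Lim[OF _ lim]) simp
  ultimately show "((\<lambda>t. ereal (f t)) \<longlongrightarrow> fzero f) (at_right 0)" and "fzero f \<noteq> -\<infinity>"
    using l_finite_below by simp_all
qed

lemma convex_on_extend_at_0:
  fixes f :: "real \<Rightarrow> real"
  assumes f: "convex_on {0<..} f" and lim: "(f \<longlongrightarrow> z) (at_right 0)"
  shows "convex_on {0..} (\<lambda>t. if t = 0 then z else f t)"
proof (rule convex_on_linorderI)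
  show "convex {0::real..}" by simp
  fix t x y :: real
  assume t: "0 < t" "t < 1" and x: "x \<in> {0..}" and xy: "x < y"
  have y: "y > 0" and mid: "(1 - t) * x + t * y > 0"
    using t x xy by (auto intro: add_nonneg_pos)
  have convex_ineq: "f ((1 - t) * s + t * y) \<le> (1 - t) * f s + t * f y" if "s > 0" for s
    using convex_onD[OF f, of t s y] t y that by simp
  show "(if (1 - t) *\<^sub>R x + t *\<^sub>R y = 0 then z else f ((1 - t) *\<^sub>R x + t *\<^sub>R y))
        \<le> (1 - t) * (if x = 0 then z else f x) + t * (if y = 0 then z else f y)"
  proof (cases "x = 0")
    case False
    then show ?thesis using convex_ineq[of x] x y mid by simp
  next
    case True
    have "isCont f (t * y)"
      using convex_on_continuous[OF _ f] t y
      by (simp add: continuous_on_eq_continuous_at)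
    moreover have "((\<lambda>s. (1 - t) * s + t * y) \<longlongrightarrow> t * y) (at_right 0)"
      by (auto intro!: tendsto_eq_intros)
    ultimately have "((\<lambda>s. f ((1 - t) * s + t * y)) \<longlongrightarrow> f (t * y)) (at_right 0)"
      by (rule isCont_tendsto_compose)
    then have "((\<lambda>s. f ((1 - t) * s + t * y) - (1 - t) * f s) \<longlongrightarrow> f (t * y) - (1 - t) * z) (at_right 0)"
      by (intro tendsto_diff tendsto_mult_left lim)
    moreover have "\<forall>\<^sub>F s in at_right 0. f ((1 - t) * s + t * y) - (1 - t) * f s \<le> t * f y"
      using eventually_at_right_real[OF zero_less_one] by eventually_elim (use convex_ineq in force)
    ultimately have "f (t * y) - (1 - t) * z \<le> t * f y"
      by (rule tendsto_upperbound) simp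
    then show ?thesis using True y t by simp
  qed
qed

definition persp :: "(real \<Rightarrow> real) \<Rightarrow> real \<Rightarrow> real \<Rightarrow> real" where
  "persp g p q = (if q = 0 then 0 else q * g (p / q))"

lemma is_kernel_nonneg: "is_kernel Y K \<Longrightarrow> 0 \<le> K x y"
  by (simp add: is_kernel_def is_dist_def)

lemma kcomp_nonneg: "(\<And>x. 0 \<le> K x y) \<Longrightarrow> (\<And>x. 0 \<le> P x) \<Longrightarrow> 0 \<le> kcomp K P y"
  unfolding kcomp_def by (simp add: sum_nonneg)

lemma kcomp_eq_0_iff:
  "(\<And>x. 0 \<le> K x y) \<Longrightarrow> (\<And>x. 0 \<le> P x) \<Longrightarrow> kcomp K P y = 0 \<longleftrightarrow> (\<forall>x. K x y * P x = 0)"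
  unfolding kcomp_def by (simp add: sum_nonneg_eq_0_iff)

lemma abs_cont_kcomp:
  assumes "is_kernel Y K" "\<And>x. 0 \<le> P x" "\<And>x. 0 \<le> Q x" "abs_cont P Q UNIV"
  shows "abs_cont (kcomp K P) (kcomp K Q) Y"
  using assms is_kernel_nonneg[OF assms(1)] by (auto simp: kcomp_eq_0_iff abs_cont_def)

(* Jensen's inequality with the weights K x y Q x / (K o Q)(y). *)
lemma persp_kcomp_le:
  assumes K: "\<And>x. 0 \<le> K x y" and Q: "\<And>x. 0 \<le> Q x" and PQ: "abs_cont P Q UNIV"
    and g: "convex_on S g" and "1 \<in> S" and ratios: "\<And>x. Q x \<noteq> 0 \<Longrightarrow> P x / Q x \<in> S"
  shows "persp g (kcomp K P y) (kcomp K Q y) \<le> (\<Sum>x\<in>UNIV. K x y * persp g (P x) (Q x))"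
proof (cases "kcomp K Q y = 0")
  case True
  then have "(\<Sum>x\<in>UNIV. K x y * persp g (P x) (Q x)) = 0"
    using K Q by (intro sum.neutral) (auto simp: kcomp_eq_0_iff persp_def)
  with True show ?thesis by (simp add: persp_def)
next
  case False
  define q where "q = kcomp K Q y"
  have "q > 0" using False kcomp_nonneg[of K y Q] K Q by (simp add: q_def order_le_less)
  define w where "w x = K x y * Q x / q" for x
  define r where "r x = (if Q x = 0 then 1 else P x / Q x)" for x
  have jensen: "g (\<Sum>x\<in>UNIV. w x *\<^sub>R r x) \<le> (\<Sum>x\<in>UNIV. w x * g (r x))"
  proof (rule convex_on_sum[OF _ _ g])
    show "sum w UNIV = 1" using \<open>q > 0\<close>
      by (simp add: w_def q_def kcomp_def flip: sum_divide_distrib)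
  qed (use \<open>q > 0\<close> K Q ratios \<open>1 \<in> S\<close> in \<open>auto simp: w_def r_def\<close>)
  have mean: "(\<Sum>x\<in>UNIV. w x *\<^sub>R r x) = kcomp K P y / q"
    using PQ by (auto simp: w_def r_def kcomp_def abs_cont_def sum_divide_distrib intro!: sum.cong)
  have "q * g (kcomp K P y / q) \<le> q * (\<Sum>x\<in>UNIV. w x * g (r x))"
    using jensen mean \<open>q > 0\<close> by simp
  also have "\<dots> = (\<Sum>x\<in>UNIV. K x y * persp g (P x) (Q x))"
    using \<open>q > 0\<close> by (auto simp: sum_distrib_left w_def r_def persp_def intro!: sum.cong)
  finally have "q * g (kcomp K P y / q) \<le> (\<Sum>x\<in>UNIV. K x y * persp g (P x) (Q x))" .
  then show ?thesis using False by (simp add: persp_def q_def)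
qed

lemma sum_persp_kcomp_le:
  assumes K: "is_kernel Y K" and Q: "\<And>x. 0 \<le> Q x" and PQ: "abs_cont P Q UNIV"
    and g: "convex_on S g" and "1 \<in> S" and "\<And>x. Q x \<noteq> 0 \<Longrightarrow> P x / Q x \<in> S"
  shows "(\<Sum>y\<in>Y. persp g (kcomp K P y) (kcomp K Q y)) \<le> (\<Sum>x\<in>UNIV. persp g (P x) (Q x))"
proof -
  have "(\<Sum>y\<in>Y. persp g (kcomp K P y) (kcomp K Q y))
      \<le> (\<Sum>y\<in>Y. \<Sum>x\<in>UNIV. K x y * persp g (P x) (Q x))"
    using assms(2-) is_kernel_nonneg[OF K] by (intro sum_mono persp_kcomp_le) auto
  also have "\<dots> = (\<Sum>x\<in>UNIV. (\<Sum>y\<in>Y. K x y) * persp g (P x) (Q x))"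
    by (subst sum.swap) (simp add: sum_distrib_right)
  also have "\<dots> = (\<Sum>x\<in>UNIV. persp g (P x) (Q x))"
    using K by (simp add: is_kernel_def is_dist_def)
  finally show ?thesis .
qed

lemma fdiv_eq_sum_persp:
  assumes nonneg: "\<And>y. y \<in> A \<Longrightarrow> 0 \<le> P y \<and> 0 \<le> Q y"
    and at_0: "\<And>y. y \<in> A \<Longrightarrow> Q y \<noteq> 0 \<Longrightarrow> P y = 0 \<Longrightarrow> fzero f = ereal (g 0)"
    and "\<And>t. t > 0 \<Longrightarrow> g t = f t"
  shows "fdiv f A P Q = ereal (\<Sum>y\<in>A. persp g (P y) (Q y))"
  unfolding fdiv_def sum_ereal[symmetric]
proof (rule sum.cong[OF refl])
  fix y assume y: "y \<in> A"
  show "(if Q y = 0 then 0 else if P y = 0 then ereal (Q y) * fzero f else ereal (Q y * f (P y / Q y)))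
        = ereal (persp g (P y) (Q y))"
  proof (cases "Q y = 0 \<or> P y = 0")
    case False
    then have "P y / Q y > 0" using nonneg[OF y] by (simp add: order_le_less)
    then show ?thesis using False assms(3) by (simp add: persp_def)
  qed (use at_0[OF y] in \<open>auto simp: persp_def\<close>)
qed

lemma fdiv_finite_imp_abs_cont:
  assumes "fzero f = \<infinity>" and "finite A" and Q: "\<And>y. 0 \<le> Q y" and "fdiv f A P Q < \<infinity>"
  shows "abs_cont Q P A"
  unfolding abs_cont_def
proof (intro ballI impI, rule ccontr)
  fix y assume "y \<in> A" "P y = 0" "Q y \<noteq> 0"
  with Q[of y] have "(if Q y = 0 then 0 else if P y = 0 then ereal (Q y) * fzero f
      else ereal (Q y * f (P y / Q y))) = \<infinity>"
    using \<open>fzero f = \<infinity>\<close> by simp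
  with \<open>y \<in> A\<close> \<open>finite A\<close> have "fdiv f A P Q = \<infinity>"
    unfolding fdiv_def sum_Pinfty by blast
  with \<open>fdiv f A P Q < \<infinity>\<close> show False by simp
qed

lemma fdiv_kcomp_le:
  fixes f :: "real \<Rightarrow> real" and K :: "'x::finite \<Rightarrow> 'y \<Rightarrow> real"
  assumes f: "convex_on {0<..} f" and K: "is_kernel Y K"
    and P: "is_dist P UNIV" and Q: "is_dist Q UNIV" and PQ: "abs_cont P Q UNIV"
    and finite_div: "fdiv f UNIV P Q < \<infinity>"
  shows "fdiv f Y (kcomp K P) (kcomp K Q) \<le> fdiv f UNIV P Q"
proof -
  have P_nonneg: "\<And>x. 0 \<le> P x" and Q_nonneg: "\<And>x. 0 \<le> Q x"
    using P Q by (auto simp: is_dist_def)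
  have KP_nonneg: "\<And>y. 0 \<le> kcomp K P y" and KQ_nonneg: "\<And>y. 0 \<le> kcomp K Q y"
    using is_kernel_nonneg[OF K] P_nonneg Q_nonneg by (auto intro: kcomp_nonneg)
  show ?thesis
  proof (cases "fzero f")
    case (real z)
    define g where "g t = (if t = 0 then z else f t)" for t
    have "convex_on {0..} g"
      unfolding g_def using convex_on_tendsto_fzero(1)[OF f] real
      by (intro convex_on_extend_at_0[OF f]) (simp add: lim_ereal)
    then have "(\<Sum>y\<in>Y. persp g (kcomp K P y) (kcomp K Q y)) \<le> (\<Sum>x\<in>UNIV. persp g (P x) (Q x))"
      using K PQ P_nonneg Q_nonneg by (intro sum_persp_kcomp_le) auto
    moreover have "fdiv f Y (kcomp K P) (kcomp K Q) = ereal (\<Sum>y\<in>Y. persp g (kcomp K P y) (kcomp K Q y))"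
      using KP_nonneg KQ_nonneg real by (intro fdiv_eq_sum_persp) (auto simp: g_def)
    moreover have "fdiv f UNIV P Q = ereal (\<Sum>x\<in>UNIV. persp g (P x) (Q x))"
      using P_nonneg Q_nonneg real by (intro fdiv_eq_sum_persp) (auto simp: g_def)
    ultimately show ?thesis by simp
  next
    case PInf
    have QP: "abs_cont Q P UNIV"
      using fdiv_finite_imp_abs_cont[OF PInf finite Q_nonneg finite_div] .
    have KQP: "abs_cont (kcomp K Q) (kcomp K P) Y"
      using K Q_nonneg P_nonneg QP by (rule abs_cont_kcomp)
    have ratio_pos: "P x / Q x \<in> {0<..}" if "Q x \<noteq> 0" for x
    proof -
      have "P x \<noteq> 0" using QP that by (auto simp: abs_cont_def)
      then show ?thesis using P_nonneg[of x] Q_nonneg[of x] that by simp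
    qed
    have "(\<Sum>y\<in>Y. persp f (kcomp K P y) (kcomp K Q y)) \<le> (\<Sum>x\<in>UNIV. persp f (P x) (Q x))"
      using K PQ Q_nonneg f ratio_pos by (intro sum_persp_kcomp_le) auto
    moreover have "fdiv f Y (kcomp K P) (kcomp K Q) = ereal (\<Sum>y\<in>Y. persp f (kcomp K P y) (kcomp K Q y))"
      using KP_nonneg KQ_nonneg KQP by (intro fdiv_eq_sum_persp) (auto simp: abs_cont_def)
    moreover have "fdiv f UNIV P Q = ereal (\<Sum>x\<in>UNIV. persp f (P x) (Q x))"
      using P_nonneg Q_nonneg QP by (intro fdiv_eq_sum_persp) (auto simp: abs_cont_def)
    ultimately show ?thesis by simp
  next
    case MInf
    with convex_on_tendsto_fzero(2)[OF f] show ?thesis by simp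
  qed
qed

lemma eta_le_one:
  fixes K :: "'x::finite \<Rightarrow> 'y \<Rightarrow> real"
  assumes f: "convex_on {0<..} f" and K: "is_kernel Y K"
  shows "eta f Y K \<le> 1"
  unfolding eta_def
proof (rule SUP_least, clarify)
  fix P Q :: "'x \<Rightarrow> real"
  assume "is_dist P UNIV" "is_dist Q UNIV" "abs_cont P Q UNIV"
    and pos: "0 < fdiv f UNIV P Q" and finite: "fdiv f UNIV P Q < \<infinity>"
  then have "fdiv f Y (kcomp K P) (kcomp K Q) / fdiv f UNIV P Q \<le> fdiv f UNIV P Q / fdiv f UNIV P Q"
    by (intro ereal_divide_right_mono fdiv_kcomp_le[OF f K])
  also have "\<dots> = 1"
    using pos finite by simp
  finally show "fdiv f Y (kcomp K (fst (P, Q))) (kcomp K (snd (P, Q))) / fdiv f UNIV (fst (P, Q)) (snd (P, Q)) \<le> 1"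
    by simp
qed

lemma deriv2_pos_imp_midpoint_gap:
  fixes f f' :: "real \<Rightarrow> real"
  assumes f': "\<And>t. t > 0 \<Longrightarrow> (f has_real_derivative f' t) (at t)"
    and f'': "(f' has_real_derivative d2) (at 1)" and "d2 > 0"
  shows "\<exists>h. 0 < h \<and> h < 1 \<and> 2 * f 1 < f (1 + h) + f (1 - h)"
proof -
  obtain \<delta>\<^sub>r where "\<delta>\<^sub>r > 0" and right: "\<And>h. 0 < h \<Longrightarrow> h < \<delta>\<^sub>r \<Longrightarrow> f' 1 < f' (1 + h)"
    using DERIV_pos_inc_right[OF f'' \<open>d2 > 0\<close>] by blast
  obtain \<delta>\<^sub>l where "\<delta>\<^sub>l > 0" and left: "\<And>h. 0 < h \<Longrightarrow> h < \<delta>\<^sub>l \<Longrightarrow> f' (1 - h) < f' 1"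
    using DERIV_pos_inc_left[OF f'' \<open>d2 > 0\<close>] by blast
  define h where "h = min 1 (min \<delta>\<^sub>r \<delta>\<^sub>l) / 2"
  have h: "0 < h" "h < 1" "h < \<delta>\<^sub>r" "h < \<delta>\<^sub>l"
    using \<open>\<delta>\<^sub>r > 0\<close> \<open>\<delta>\<^sub>l > 0\<close> by (auto simp: h_def)
  obtain z where z: "1 < z" "z < 1 + h" "f (1 + h) - f 1 = h * f' z"
    using MVT2[of 1 "1 + h" f f'] h f' by auto
  obtain w where w: "1 - h < w" "w < 1" "f 1 - f (1 - h) = h * f' w"
    using MVT2[of "1 - h" 1 f f'] h f' by auto
  have "f' w < f' 1" "f' 1 < f' z"
    using left[of "1 - w"] right[of "z - 1"] z w h by auto
  then have "h * f' w < h * f' z" using h by simp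
  then have "2 * f 1 < f (1 + h) + f (1 - h)" using z(3) w(3) by linarith
  then show ?thesis using h by blast
qed

lemma sum_UNIV_two_points:
  fixes \<phi> :: "'x::finite \<Rightarrow> 'a::comm_monoid_add"
  assumes "a \<noteq> b" and "\<And>x. x \<noteq> a \<Longrightarrow> x \<noteq> b \<Longrightarrow> \<phi> x = 0"
  shows "(\<Sum>x\<in>UNIV. \<phi> x) = \<phi> a + \<phi> b"
proof -
  have "(\<Sum>x\<in>UNIV. \<phi> x) = (\<Sum>x\<in>{a, b}. \<phi> x)"
    by (rule sum.mono_neutral_right) (use assms in auto)
  then show ?thesis using assms by simp
qed

lemma kcomp_ge_colsum:
  assumes "\<And>x. 0 \<le> K x y" and "\<And>x. c \<le> P x"
  shows "c * (\<Sum>x\<in>UNIV. K x y) \<le> kcomp K P y"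
  unfolding kcomp_def sum_distrib_left
  using mult_left_mono[OF assms(2) assms(1)] by (intro sum_mono) (simp add: mult.commute)

lemma Qset_ge: "P \<in> Qset c \<Longrightarrow> c \<le> P x"
  unfolding Qset_def using Min_le[of "range P" "P x"] by auto

lemma one_le_eta_if_fdiv_kcomp_eq:
  fixes K :: "'x::finite \<Rightarrow> 'y \<Rightarrow> real"
  assumes "is_dist P UNIV" "is_dist Q UNIV" "abs_cont P Q UNIV" and "D > 0"
    and "fdiv f UNIV P Q = ereal D" and "fdiv f Y (kcomp K P) (kcomp K Q) = ereal D"
  shows "1 \<le> eta f Y K"
proof -
  have "fdiv f Y (kcomp K (fst (P, Q))) (kcomp K (snd (P, Q))) / fdiv f UNIV (fst (P, Q)) (snd (P, Q))
      \<le> eta f Y K"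
    unfolding eta_def using assms by (intro SUP_upper) auto
  then show ?thesis using assms by simp
qed

definition split_kernel :: "'x \<Rightarrow> 'x \<Rightarrow> 'x \<Rightarrow> nat \<Rightarrow> real" where
  "split_kernel a b x y =
     (if y = 0 then (if x = a then 1 else if x = b then 0 else 1/2)
      else if y = 1 then (if x = a then 0 else if x = b then 1 else 1/2) else 0)"

lemma is_kernel_split_kernel: "is_kernel {0, 1} (split_kernel a b)"
  unfolding is_kernel_def is_dist_def split_kernel_def by auto

lemma split_kernel_colsum:
  fixes a b :: "'x::finite"
  assumes "a \<noteq> b" and "y \<in> {0, 1}"
  shows "(\<Sum>x\<in>UNIV. split_kernel a b x y) = real CARD('x) / 2"
proof -
  have "(\<Sum>x\<in>UNIV. split_kernel a b x y - 1/2) = (split_kernel a b a y - 1/2) + (split_kernel a b b y - 1/2)"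
    using assms by (intro sum_UNIV_two_points) (auto simp: split_kernel_def)
  also have "\<dots> = 0" using assms by (auto simp: split_kernel_def)
  finally show ?thesis by (simp add: sum_subtractf)
qed

lemma Max_split_kernel:
  fixes a b :: "'x::finite"
  assumes "a \<noteq> b" and "y \<in> {0, 1}"
  shows "Max (range (\<lambda>x. split_kernel a b x y)) = 1"
proof (rule Max_eqI)
  show "1 \<in> range (\<lambda>x. split_kernel a b x y)"
    using assms by (auto simp: split_kernel_def image_iff intro: exI[of _ a] exI[of _ b])
qed (auto simp: split_kernel_def)

lemma split_kernel_in_Mset:
  fixes a b :: "'x::finite"
  assumes "a \<noteq> b" and "c > 0" and eps: "ln (2 / (real CARD('x) * c)) \<le> eps"
  shows "({0, 1}, split_kernel a b) \<in> Mset eps c"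
proof -
  have "pml (split_kernel a b) P y \<le> eps" if "P \<in> Qset c" and y: "y \<in> {0, 1}" for P y
  proof -
    have "c * (\<Sum>x\<in>UNIV. split_kernel a b x y) \<le> kcomp (split_kernel a b) P y"
      by (rule kcomp_ge_colsum)
        (use is_kernel_nonneg[OF is_kernel_split_kernel] Qset_ge[OF that(1)] in auto)
    then have "c * (real CARD('x) / 2) \<le> kcomp (split_kernel a b) P y"
      using split_kernel_colsum[OF \<open>a \<noteq> b\<close> y] by simp
    moreover have "0 < c * (real CARD('x) / 2)"
      using \<open>c > 0\<close> by simp
    ultimately have "1 / kcomp (split_kernel a b) P y \<le> 2 / (real CARD('x) * c)"
      and "0 < kcomp (split_kernel a b) P y"
      by (simp_all add: field_simps)
    then have "ln (1 / kcomp (split_kernel a b) P y) \<le> ln (2 / (real CARD('x) * c))"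
      by (intro ln_mono) simp_all
    then show ?thesis
      using eps Max_split_kernel[OF \<open>a \<noteq> b\<close> y] by (simp add: pml_def)
  qed
  then have "Ccap {0, 1} (split_kernel a b) (Qset c) \<le> ereal eps"
    unfolding Ccap_def by (intro SUP_least) auto
  then show ?thesis unfolding Mset_def using is_kernel_split_kernel by auto
qed

lemma one_le_eta_split_kernel:
  fixes a b :: "'x::finite"
  assumes "a \<noteq> b" and h: "0 < h" "h < 1" and gap: "0 < f (1 + h) + f (1 - h)"
  shows "1 \<le> eta f {0, 1} (split_kernel a b)"
proof (rule one_le_eta_if_fdiv_kcomp_eq)
  define P where "P x = (if x = a then (1 + h) / 2 else if x = b then (1 - h) / 2 else 0)" for x
  define Q where "Q x = (if x = a \<or> x = b then 1 / 2 else 0 :: real)" for x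
  define D where "D = f (1 + h) / 2 + f (1 - h) / 2"
  have "persp f (r / 2) (1 / 2) = f r / 2" for r
    by (simp add: persp_def)
  then have persp_D: "persp f ((1 + h) / 2) (1 / 2) + persp f ((1 - h) / 2) (1 / 2) = D"
    unfolding D_def by (simp only:)
  have sum_P: "(\<Sum>x\<in>UNIV. \<phi> x * P x) = \<phi> a * ((1 + h) / 2) + \<phi> b * ((1 - h) / 2)" for \<phi>
    using \<open>a \<noteq> b\<close> by (subst sum_UNIV_two_points) (auto simp: P_def)
  have sum_Q: "(\<Sum>x\<in>UNIV. \<phi> x * Q x) = \<phi> a / 2 + \<phi> b / 2" for \<phi>
    using \<open>a \<noteq> b\<close> by (subst sum_UNIV_two_points) (auto simp: Q_def)
  show "is_dist P UNIV"
    using sum_P[of "\<lambda>_. 1"] h by (auto simp: is_dist_def P_def field_simps)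
  show "is_dist Q UNIV"
    using sum_Q[of "\<lambda>_. 1"] by (auto simp: is_dist_def Q_def)
  show "abs_cont P Q UNIV"
    by (auto simp: abs_cont_def P_def Q_def)
  show "D > 0" using gap by (simp add: D_def)
  have KP: "kcomp (split_kernel a b) P 0 = (1 + h) / 2" "kcomp (split_kernel a b) P 1 = (1 - h) / 2"
    using \<open>a \<noteq> b\<close> by (auto simp: kcomp_def sum_P split_kernel_def)
  have KQ: "kcomp (split_kernel a b) Q 0 = 1 / 2" "kcomp (split_kernel a b) Q 1 = 1 / 2"
    using \<open>a \<noteq> b\<close> by (auto simp: kcomp_def sum_Q split_kernel_def)
  have "fdiv f {0, 1} (kcomp (split_kernel a b) P) (kcomp (split_kernel a b) Q)
      = ereal (\<Sum>y\<in>{0, 1}. persp f (kcomp (split_kernel a b) P y) (kcomp (split_kernel a b) Q y))"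
    by (rule fdiv_eq_sum_persp) (use h KP KQ in auto)
  also have "\<dots> = ereal D"
    using persp_D by (simp only: sum.insert_if finite.intros KP KQ) simp
  finally show "fdiv f {0, 1} (kcomp (split_kernel a b) P) (kcomp (split_kernel a b) Q) = ereal D" .
  have "fdiv f UNIV P Q = ereal (\<Sum>x\<in>UNIV. persp f (P x) (Q x))"
    by (rule fdiv_eq_sum_persp) (use h in \<open>auto simp: P_def Q_def split: if_splits\<close>)
  also have "(\<Sum>x\<in>UNIV. persp f (P x) (Q x)) = persp f (P a) (Q a) + persp f (P b) (Q b)"
    using \<open>a \<noteq> b\<close> by (rule sum_UNIV_two_points) (simp add: P_def Q_def persp_def)
  also have "\<dots> = D"
    using persp_D by (simp only: P_def Q_def if_True if_False simp_thms not_sym[OF \<open>a \<noteq> b\<close>])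
  finally show "fdiv f UNIV P Q = ereal D" .
qed

lemma two_le_CARD_imp_distinct:
  assumes "2 \<le> CARD('x::finite)"
  shows "\<exists>a b :: 'x. a \<noteq> b"
proof (rule ccontr)
  assume "\<not> (\<exists>a b :: 'x. a \<noteq> b)"
  then have "(UNIV :: 'x set) = {undefined}" by auto
  then have "CARD('x) = card {undefined :: 'x}" by (rule arg_cong)
  then show False using assms by simp
qed

theorem theorem2:
  fixes c eps :: real and f :: "real \<Rightarrow> real"
  assumes "CARD('x::finite) \<ge> 2"
    and "0 < c" and "c < 1 / real CARD('x)"
    and "eps \<ge> ln (2 / (real CARD('x) * c))"
    and "convex_on {0<..} f" and "f 1 = 0"
    and "\<exists>f' f''. (\<forall>t>0. (f has_real_derivative f' t) (at t) \<and> (f' has_real_derivative f'' t) (at t))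
           \<and> continuous_on {0<..} f'' \<and> f'' 1 > 0"
  shows "(SUP YK \<in> (Mset eps c :: (nat set \<times> ('x \<Rightarrow> nat \<Rightarrow> real)) set). eta f (fst YK) (snd YK)) = 1"
proof (rule antisym)
  show "(SUP YK \<in> (Mset eps c :: (nat set \<times> ('x \<Rightarrow> nat \<Rightarrow> real)) set). eta f (fst YK) (snd YK)) \<le> 1"
    using eta_le_one[OF \<open>convex_on {0<..} f\<close>] by (intro SUP_least) (auto simp: Mset_def)
next
  obtain f' f'' where "\<forall>t>0. (f has_real_derivative f' t) (at t) \<and> (f' has_real_derivative f'' t) (at t)"
    and "f'' 1 > 0"
    using assms(7) by blast
  then have "\<exists>h. 0 < h \<and> h < 1 \<and> 2 * f 1 < f (1 + h) + f (1 - h)"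
    by (intro deriv2_pos_imp_midpoint_gap[of f f' "f'' 1"]) auto
  then obtain h where h: "0 < h" "h < 1" "0 < f (1 + h) + f (1 - h)"
    using \<open>f 1 = 0\<close> by auto
  obtain a b :: 'x where "a \<noteq> b"
    using two_le_CARD_imp_distinct[OF \<open>CARD('x) \<ge> 2\<close>] by blast
  show "1 \<le> (SUP YK \<in> (Mset eps c :: (nat set \<times> ('x \<Rightarrow> nat \<Rightarrow> real)) set). eta f (fst YK) (snd YK))"
    using split_kernel_in_Mset[OF \<open>a \<noteq> b\<close> \<open>0 < c\<close> assms(4)]
      one_le_eta_split_kernel[OF \<open>a \<noteq> b\<close> h]
    by (intro SUP_upper2) auto
qed

end
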